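(* Let $d_1,d_2,e_1,e_2\ge2$ be integers, $d=d_1+d_2$, $n=d_1e_1d_2e_2$, and let $A$ be the $d\times n$ matrix whose columns are the vectors $i\,\mathbf{e}_\kappa\oplus j\,\mathbf{e}_\lambda\in\mathbb{N}^{d_1}\oplus\mathbb{N}^{d_2}$ for $(\kappa,i,\lambda,j)\in[d_1]\times[e_1]\times[d_2]\times[e_2]$. Then $$\mathrm{pos}(A)=\Bigl\{y\in\mathbb{R}^d_{\ge0}: y_1+\dots+y_{d_1}\le e_1(y_{d_1+1}+\dots+y_{d_1+d_2}),\ \ y_{d_1+1}+\dots+y_{d_1+d_2}\le e_2(y_1+\dots+y_{d_1})\Bigr\}.$$ This $d$-dimensional cone has $2d_1d_2$ rays and $d_1+d_2+2$ facets. It is the cone over a simple $(d-1)$-dimensional polytope which is combinatorially isomorphic to the product of simplices $\Delta_1\times\Delta_{d_1-1}\times\Delta_{d_2-1}$.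
   Context: $[m]=\{1,\dots,m\}$; $\mathbf{e}_\kappa$ and $\mathbf{e}_\lambda$ denote standard unit vectors in $\mathbb{R}^{d_1}$ and $\mathbb{R}^{d_2}$; $\mathrm{pos}(A)$ is the convex polyhedral cone spanned by the columns of $A$; $\Delta_k$ is the $k$-dimensional simplex. *)

theory Defs
  imports "HOL-Analysis.Analysis"
begin

definition pos_cone :: "('i \<Rightarrow> 'v::real_vector) \<Rightarrow> 'i set \<Rightarrow> 'v set" where
  "pos_cone a I = {\<Sum>k\<in>I. c k *\<^sub>R a k | c. \<forall>k\<in>I. 0 \<le> c k}"

definition col_vec :: "'a::finite \<Rightarrow> nat \<Rightarrow> 'b::finite \<Rightarrow> nat \<Rightarrow> real ^ ('a + 'b)" where
  "col_vec ka i la j = (\<chi> m. case m of Inl k \<Rightarrow> (if k = ka then real i else 0)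
                                     | Inr l \<Rightarrow> (if l = la then real j else 0))"

text \<open>Standard simplex of dimension CARD('n) - 1.\<close>
definition std_simplex :: "(real ^ ('n::finite)) set" where
  "std_simplex = {x. (\<forall>i. 0 \<le> x $ i) \<and> (\<Sum>i\<in>UNIV. x $ i) = 1}"

definition comb_iso :: "'u::euclidean_space set \<Rightarrow> 'w::euclidean_space set \<Rightarrow> bool" where
  "comb_iso P Q \<longleftrightarrow> (\<exists>f. bij_betw f {F. F face_of P} {G. G face_of Q} \<and>
      (\<forall>F1 F2. F1 face_of P \<longrightarrow> F2 face_of P \<longrightarrow> (F1 \<subseteq> F2 \<longleftrightarrow> f F1 \<subseteq> f F2)))"

definition simple_polytope :: "'u::euclidean_space set \<Rightarrow> bool" where
  "simple_polytope P \<longleftrightarrow> polytope P \<and>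
     (\<forall>v. v extreme_point_of P \<longrightarrow> int (card {F. F facet_of P \<and> v \<in> F}) = aff_dim P)"

end

theory Submission
  imports Defs
begin

text \<open>
  Write \<open>s\<close> and \<open>t\<close> for the two block sums \<open>y\<^sub>1 + \<dots> + y\<^sub>d\<^sub>1\<close> and
  \<open>y\<^sub>d\<^sub>1\<^sub>+\<^sub>1 + \<dots> + y\<^sub>d\<close>. The inequality description of the cone is a
  decomposition argument: if \<open>y \<ge> 0\<close> and \<open>s \<le> e1 t\<close>, \<open>t \<le> e2 s\<close>, then
  \<open>(s, t) = \<alpha> (e1, 1) + \<beta> (1, e2)\<close> with \<open>\<alpha>, \<beta> \<ge> 0\<close>, and spreading this over the pairs
  \<open>(\<kappa>, \<lambda>)\<close> with weights \<open>y\<^sub>\<kappa> y\<^sub>\<lambda> / (s t)\<close> writes \<open>y\<close> as a nonnegative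
  combination of the \<open>2 d1 d2\<close> extreme columns \<open>e1 e\<^sub>\<kappa> + e\<^sub>\<lambda>\<close> and \<open>e\<^sub>\<kappa> + e2 e\<^sub>\<lambda>\<close>.

  The nonempty faces of a polyhedron given by finitely many linear inequalities are the sets on
  which some of them are tight. For our cone such a set is determined by the supports
  \<open>A \<subseteq> [d1]\<close>, \<open>B \<subseteq> [d2]\<close> of its points and the set \<open>X \<subseteq> {1, 2}\<close> of kinds of
  extreme columns it contains, and for nonempty \<open>A\<close>, \<open>B\<close>, \<open>X\<close> its dimension is
  \<open>|A| + |B| + |X| - 2\<close>. The faces of \<open>\<Delta>\<^sub>1 \<times> \<Delta>\<^sub>d\<^sub>1\<^sub>-\<^sub>1 \<times> \<Delta>\<^sub>d\<^sub>2\<^sub>-\<^sub>1\<close> are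
  products of faces of the factors, parametrised by the same triples and ordered in the same way,
  which gives the combinatorial isomorphism for the slice \<open>s + t = 1\<close> of the cone. Rays,
  facets and the facets through a vertex are then counted as triples with
  \<open>|A| + |B| + |X|\<close> equal to \<open>3\<close> and \<open>d + 1\<close>.
\<close>

section \<open>Faces of polyhedra given by linear inequalities\<close>

definition tight_face ::
    "'v::real_vector set \<Rightarrow> ('i \<Rightarrow> 'v \<Rightarrow> real) \<Rightarrow> ('i \<Rightarrow> real) \<Rightarrow> 'i set \<Rightarrow> 'i set \<Rightarrow> 'v set" where
  "tight_face L g b I T = {x \<in> L. (\<forall>i\<in>I. g i x \<le> b i) \<and> (\<forall>i\<in>T. g i x = b i)}"

lemma tight_face_mono: "T' \<subseteq> T \<Longrightarrow> tight_face L g b I T \<subseteq> tight_face L g b I T'"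
  by (auto simp: tight_face_def)

lemma convex_tight_face:
  assumes "convex L" and "\<And>i. linear (g i)"
  shows "convex (tight_face L g b I T)"
proof -
  have "tight_face L g b I T = L \<inter> (\<Inter>i\<in>I. g i -` {..b i}) \<inter> (\<Inter>i\<in>T. g i -` {b i})"
    by (auto simp: tight_face_def)
  then show ?thesis
    using assms by (auto intro!: convex_Int convex_INT convex_linear_vimage)
qed

lemma convex_cone_tight_face:
  assumes "\<And>i. linear (g i)"
  shows "convex_cone (tight_face UNIV g (\<lambda>_. 0) I T)"
  using assms by (auto simp: convex_cone_iff tight_face_def linear_add linear_scale
      linear_0 mult_nonneg_nonpos add_nonpos_nonpos)

lemma tight_face_face_of:
  assumes L: "convex L" and g: "\<And>i. linear (g i)" and "T \<subseteq> I"
  shows "tight_face L g b I T face_of tight_face L g b I {}"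
  unfolding face_of_def
proof (intro conjI ballI impI)
  show "tight_face L g b I T \<subseteq> tight_face L g b I {}" by (rule tight_face_mono) simp
  show "convex (tight_face L g b I T)" by (rule convex_tight_face[OF L g])
next
  fix x y z
  assume x: "x \<in> tight_face L g b I {}" and y: "y \<in> tight_face L g b I {}"
    and z: "z \<in> tight_face L g b I T" and "z \<in> open_segment x y"
  then obtain u where u: "0 < u" "u < 1" and zxy: "z = (1 - u) *\<^sub>R x + u *\<^sub>R y"
    by (auto simp: in_segment)
  have "g i x = b i \<and> g i y = b i" if "i \<in> T" for i
  proof -
    have "g i x \<le> b i" "g i y \<le> b i" using x y that \<open>T \<subseteq> I\<close> by (auto simp: tight_face_def)
    moreover have "g i z = (1 - u) * g i x + u * g i y"
      using g[of i] unfolding zxy by (simp add: linear_add linear_scale)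
    moreover have "g i z = b i" using z that by (auto simp: tight_face_def)
    ultimately have "(1 - u) * (b i - g i x) + u * (b i - g i y) = 0"
      by (simp add: algebra_simps)
    moreover have "0 \<le> (1 - u) * (b i - g i x)" "0 \<le> u * (b i - g i y)"
      using u \<open>g i x \<le> b i\<close> \<open>g i y \<le> b i\<close> by simp_all
    ultimately show ?thesis
      using u by (simp add: add_nonneg_eq_0_iff)
  qed
  then show "x \<in> tight_face L g b I T" "y \<in> tight_face L g b I T"
    using x y by (auto simp: tight_face_def)
qed

lemma convex_common_strict_point:
  fixes g :: "'i \<Rightarrow> 'v::real_vector \<Rightarrow> real"
  assumes F: "convex F" "F \<noteq> {}" and "finite J" and g: "\<And>j. linear (g j)"
    and le: "\<And>j x. j \<in> J \<Longrightarrow> x \<in> F \<Longrightarrow> g j x \<le> b j"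
    and strict: "\<And>j. j \<in> J \<Longrightarrow> \<exists>x\<in>F. g j x < b j"
  shows "\<exists>y\<in>F. \<forall>j\<in>J. g j y < b j"
  using \<open>finite J\<close> le strict
proof (induction J rule: finite_induct)
  case empty
  then show ?case using F by auto
next
  case (insert j J)
  then obtain y where y: "y \<in> F" "\<forall>i\<in>J. g i y < b i" by auto
  obtain w where w: "w \<in> F" "g j w < b j" using insert.prems by blast
  let ?z = "(1/2) *\<^sub>R y + (1/2) *\<^sub>R w"
  have "?z \<in> F" using convexD[OF F(1) y(1) w(1)] by simp
  moreover have "g i ?z < b i" if "i \<in> insert j J" for i
  proof -
    have "g i y \<le> b i" "g i w \<le> b i" using insert.prems(1) that y(1) w(1) by auto
    moreover have "g i y < b i \<or> g i w < b i" using that y(2) w(2) by auto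
    moreover have "g i ?z = (g i y + g i w) / 2" using g[of i] by (simp add: linear_add linear_scale)
    ultimately show ?thesis by auto
  qed
  ultimately show ?case by blast
qed

lemma tight_face_extend_beyond:
  assumes L: "affine L" and g: "\<And>i. linear (g i)" and "finite I"
    and y: "y \<in> tight_face L g b I T" and z: "z \<in> tight_face L g b I T"
    and strict: "\<forall>i\<in>I - T. g i y < b i"
  obtains e where "0 < e" "(1 + e) *\<^sub>R y - e *\<^sub>R z \<in> tight_face L g b I {}"
proof -
  define w where "w e = (1 + e) *\<^sub>R y - e *\<^sub>R z" for e :: real
  have "\<forall>\<^sub>F e in at_right 0. \<forall>i\<in>I. g i (w e) \<le> b i"
  proof (rule eventually_ball_finite[OF \<open>finite I\<close>], rule ballI)
    fix i assume "i \<in> I"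
    have gw: "g i (w e) = g i y + e * (g i y - g i z)" for e
      using g[of i] by (simp add: w_def linear_diff linear_scale) (simp add: algebra_simps)
    show "\<forall>\<^sub>F e in at_right 0. g i (w e) \<le> b i"
    proof (cases "i \<in> T")
      case True
      then have "g i y = b i" "g i z = b i" using y z by (auto simp: tight_face_def)
      then show ?thesis by (simp add: gw)
    next
      case False
      have "((\<lambda>e. g i y + e * (g i y - g i z)) \<longlongrightarrow> g i y + 0 * (g i y - g i z)) (at_right 0)"
        by (intro tendsto_intros)
      then have "\<forall>\<^sub>F e in at_right 0. g i y + e * (g i y - g i z) < b i"
        using strict \<open>i \<in> I\<close> False by (intro order_tendstoD) auto
      then show ?thesis by eventually_elim (simp add: gw)
    qed
  qed
  then obtain e where e: "0 < e" "\<forall>i\<in>I. g i (w e) \<le> b i"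
    using eventually_happens'[OF trivial_limit_at_right_real
        eventually_conj[OF eventually_at_right_less]] by blast
  have "(1 + e) *\<^sub>R y + (- e) *\<^sub>R z \<in> L"
    using y z by (intro mem_affine[OF L]) (auto simp: tight_face_def)
  then have "w e \<in> tight_face L g b I {}" using e by (simp add: w_def tight_face_def)
  with \<open>0 < e\<close> show ?thesis by (intro that) (simp_all add: w_def)
qed

text \<open>A point of \<open>F\<close> at which exactly the constraints in \<open>T\<close> are tight lies in the relative
  interior of the set cut out by \<open>T\<close>, so the face \<open>F\<close> contains all of that set.\<close>

lemma tight_face_subset_face:
  assumes L: "affine L" and g: "\<And>i. linear (g i)" and "finite I"
    and F: "F face_of tight_face L g b I {}" and "y \<in> F"
    and y: "y \<in> tight_face L g b I T" and strict: "\<forall>i\<in>I - T. g i y < b i"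
  shows "tight_face L g b I T \<subseteq> F"
proof
  fix z assume z: "z \<in> tight_face L g b I T"
  show "z \<in> F"
  proof (cases "z = y")
    case True
    with \<open>y \<in> F\<close> show ?thesis by simp
  next
    case False
    obtain e where "0 < e" and w: "(1 + e) *\<^sub>R y - e *\<^sub>R z \<in> tight_face L g b I {}"
      using tight_face_extend_beyond[OF L g \<open>finite I\<close> y z strict] .
    let ?w = "(1 + e) *\<^sub>R y - e *\<^sub>R z"
    have "z \<noteq> ?w"
    proof
      assume "z = ?w"
      then have "(1 + e) *\<^sub>R (z - y) = 0" by (simp add: algebra_simps)
      then show False using False \<open>0 < e\<close> by simp
    qed
    moreover have "y = (1 - 1 / (1 + e)) *\<^sub>R z + (1 / (1 + e)) *\<^sub>R ?w"
      using \<open>0 < e\<close> by (simp add: scaleR_diff_right field_simps)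
        (simp add: scaleR_add_left[symmetric] add_divide_distrib[symmetric])
    moreover have "0 < 1 / (1 + e)" "1 / (1 + e) < 1" using \<open>0 < e\<close> by simp_all
    ultimately have "y \<in> open_segment z ?w" unfolding in_segment by blast
    moreover have "z \<in> tight_face L g b I {}" using z by (auto simp: tight_face_def)
    ultimately show ?thesis using face_ofD[OF F _ _ w \<open>y \<in> F\<close>] by blast
  qed
qed

lemma face_of_tight_face_eq:
  assumes L: "affine L" and g: "\<And>i. linear (g i)" and "finite I"
    and F: "F face_of tight_face L g b I {}" and "F \<noteq> {}"
  shows "F = tight_face L g b I {i \<in> I. \<forall>x\<in>F. g i x = b i}"
    (is "F = tight_face L g b I ?T")
proof
  have FS: "F \<subseteq> tight_face L g b I {}" using F by (rule face_of_imp_subset)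
  then show F_sub: "F \<subseteq> tight_face L g b I ?T" by (auto simp: tight_face_def)
  have "\<exists>y\<in>F. \<forall>i\<in>I - ?T. g i y < b i"
  proof (rule convex_common_strict_point[OF face_of_imp_convex[OF F] \<open>F \<noteq> {}\<close> _ g])
    show "finite (I - ?T)" using \<open>finite I\<close> by simp
    show "g i x \<le> b i" if "i \<in> I - ?T" "x \<in> F" for i x
      using that FS by (auto simp: tight_face_def)
    show "\<exists>x\<in>F. g i x < b i" if "i \<in> I - ?T" for i
      using that FS by (force simp: tight_face_def)
  qed
  then obtain y where "y \<in> F" "\<forall>i\<in>I - ?T. g i y < b i" by blast
  then show "tight_face L g b I ?T \<subseteq> F"
    using F_sub by (intro tight_face_subset_face[OF L g \<open>finite I\<close> F]) auto
qed

lemma faces_of_tight_face: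
  assumes "affine L" and "\<And>i. linear (g i)" and "finite I"
  shows "{F. F face_of tight_face L g b I {}} = insert {} (tight_face L g b I ` Pow I)"
proof (intro antisym subsetI)
  fix F assume "F \<in> {F. F face_of tight_face L g b I {}}"
  then show "F \<in> insert {} (tight_face L g b I ` Pow I)"
    using face_of_tight_face_eq[where L = L and g = g and b = b and I = I] assms by blast
next
  fix F assume "F \<in> insert {} (tight_face L g b I ` Pow I)"
  then show "F \<in> {F. F face_of tight_face L g b I {}}"
    using tight_face_face_of[OF affine_imp_convex[OF \<open>affine L\<close>] assms(2)] by auto
qed

section \<open>Face lattices indexed by triples of sets\<close>

lemma Inl_mem_Plus [simp]: "Inl a \<in> A <+> B \<longleftrightarrow> a \<in> A"
  and Inr_mem_Plus [simp]: "Inr b \<in> A <+> B \<longleftrightarrow> b \<in> B"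
  by auto

lemma Plus_vimage_Inl_Inr: "Inl -` S <+> Inr -` S = S"
proof (rule set_eqI)
  show "x \<in> Inl -` S <+> Inr -` S \<longleftrightarrow> x \<in> S" for x by (cases x) auto
qed

lemma range_compl_Plus_Plus: "range (\<lambda>(A, B, X). f (- ((A <+> B) <+> X))) = range f"
proof (intro antisym subsetI)
  fix F assume "F \<in> range f"
  then obtain T where "F = f T" by blast
  then show "F \<in> range (\<lambda>(A, B, X). f (- ((A <+> B) <+> X)))"
    by (intro image_eqI[where x = "(Inl -` Inl -` (- T), Inr -` Inl -` (- T), Inr -` (- T))"])
      (simp_all add: Plus_vimage_Inl_Inr)
qed auto

lemma param_subset_iff:
  fixes \<Phi> :: "'a set \<Rightarrow> 'b set \<Rightarrow> 'c set \<Rightarrow> 'v set" and q :: "'a \<Rightarrow> 'b \<Rightarrow> 'c \<Rightarrow> 'v"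
  assumes mem: "\<And>k l x A B X. q k l x \<in> \<Phi> A B X \<longleftrightarrow> k \<in> A \<and> l \<in> B \<and> x \<in> X"
    and empty: "\<And>A B X. A = {} \<or> B = {} \<or> X = {} \<Longrightarrow> \<Phi> A B X = {}"
    and mono: "\<And>A B X A' B' X'. A \<subseteq> A' \<Longrightarrow> B \<subseteq> B' \<Longrightarrow> X \<subseteq> X' \<Longrightarrow> \<Phi> A B X \<subseteq> \<Phi> A' B' X'"
  shows "\<Phi> A B X \<subseteq> \<Phi> A' B' X' \<longleftrightarrow> A = {} \<or> B = {} \<or> X = {} \<or> (A \<subseteq> A' \<and> B \<subseteq> B' \<and> X \<subseteq> X')"
proof (cases "A = {} \<or> B = {} \<or> X = {}")
  case True
  then show ?thesis using empty by auto
next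
  case False
  then obtain k0 l0 x0 where "k0 \<in> A" "l0 \<in> B" "x0 \<in> X" by blast
  have "A \<subseteq> A' \<and> B \<subseteq> B' \<and> X \<subseteq> X'" if sub: "\<Phi> A B X \<subseteq> \<Phi> A' B' X'"
  proof -
    have "k \<in> A' \<and> l \<in> B' \<and> x \<in> X'" if "k \<in> A" "l \<in> B" "x \<in> X" for k l x
    proof -
      have "q k l x \<in> \<Phi> A B X" using that by (simp add: mem)
      then have "q k l x \<in> \<Phi> A' B' X'" using sub by blast
      then show ?thesis by (simp add: mem)
    qed
    then show ?thesis using \<open>k0 \<in> A\<close> \<open>l0 \<in> B\<close> \<open>x0 \<in> X\<close> by blast
  qed
  moreover have "\<Phi> A B X \<subseteq> \<Phi> A' B' X'" if "A \<subseteq> A' \<and> B \<subseteq> B' \<and> X \<subseteq> X'"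
    using that mono by blast
  ultimately show ?thesis using False by blast
qed

lemma comb_iso_if_faces_param:
  fixes P :: "'u::euclidean_space set" and Q :: "'w::euclidean_space set"
  assumes P: "{F. F face_of P} = range \<phi>" and Q: "{G. G face_of Q} = range \<psi>"
    and subset_iff: "\<And>s t. \<phi> s \<subseteq> \<phi> t \<longleftrightarrow> \<psi> s \<subseteq> \<psi> t"
  shows "comb_iso P Q"
proof -
  have eq_iff: "\<phi> s = \<phi> t \<longleftrightarrow> \<psi> s = \<psi> t" for s t
    by (simp add: set_eq_subset subset_iff)
  define f where "f F = \<psi> (inv \<phi> F)" for F
  have f_\<phi>: "f (\<phi> t) = \<psi> t" for t
  proof -
    have "\<phi> (inv \<phi> (\<phi> t)) = \<phi> t" by (simp add: f_inv_into_f)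
    then show ?thesis unfolding f_def by (simp only: eq_iff)
  qed
  have "inj_on f (range \<phi>)"
    by (intro inj_onI) (metis f_\<phi> eq_iff rangeE)
  moreover have "f ` range \<phi> = range \<psi>"
    by (auto simp: f_\<phi> image_image)
  moreover have "F1 \<subseteq> F2 \<longleftrightarrow> f F1 \<subseteq> f F2" if "F1 face_of P" "F2 face_of P" for F1 F2
  proof -
    have "F1 \<in> range \<phi>" "F2 \<in> range \<phi>" using that by (simp_all flip: P)
    then obtain s t where "F1 = \<phi> s" "F2 = \<phi> t" by blast
    then show ?thesis by (simp add: f_\<phi> subset_iff)
  qed
  ultimately show ?thesis
    unfolding comb_iso_def bij_betw_def P Q by blast
qed

lemma subset_2_cases:
  assumes "(X :: 2 set) \<noteq> {}"
  shows "X = {1} \<or> X = {2} \<or> X = UNIV"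
proof -
  have "X \<in> Pow {1, 2}" using UNIV_2 by auto
  then show ?thesis using assms by (auto simp: Pow_insert UNIV_2)
qed

lemma card_Compl_finite: "card (- (A :: 'a::finite set)) = CARD('a) - card A"
  by (simp add: Compl_eq_Diff_UNIV card_Diff_subset)

definition face_params :: "nat \<Rightarrow> ('a set \<times> 'b set \<times> 'c set) set" where
  "face_params n = {(A, B, X). A \<noteq> {} \<and> B \<noteq> {} \<and> X \<noteq> {} \<and> card A + card B + card X = n}"

definition facet_param :: "'a + 'b + 'c \<Rightarrow> 'a set \<times> 'b set \<times> 'c set" where
  "facet_param i = ({k. Inl k \<noteq> i}, {l. Inr (Inl l) \<noteq> i}, {x. Inr (Inr x) \<noteq> i})"

lemma face_params_3:
  "face_params 3 = (\<lambda>(k, l, x). ({k}, {l}, {x})) ` (UNIV :: ('a::finite \<times> 'b::finite \<times> 'c::finite) set)"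
proof (intro antisym subsetI)
  fix t :: "'a set \<times> 'b set \<times> 'c set" assume "t \<in> face_params 3"
  then obtain A B X where t: "t = (A, B, X)" "A \<noteq> {}" "B \<noteq> {}" "X \<noteq> {}"
    and "card A + card B + card X = 3"
    by (auto simp: face_params_def)
  moreover have "0 < card A" "0 < card B" "0 < card X" using t by (simp_all add: card_gt_0_iff)
  ultimately have "card A = 1" "card B = 1" "card X = 1" by linarith+
  then obtain k l x where "A = {k}" "B = {l}" "X = {x}" by (auto simp: card_1_singleton_iff)
  then show "t \<in> (\<lambda>(k, l, x). ({k}, {l}, {x})) ` UNIV" by (auto simp: t intro: image_eqI[where x = "(k, l, x)"])
qed (auto simp: face_params_def)

lemma card_face_params_3: "card (face_params 3 :: ('a::finite set \<times> 'b::finite set \<times> 'c::finite set) set)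
    = CARD('a) * CARD('b) * CARD('c)"
proof -
  have "inj (\<lambda>(k::'a, l::'b, x::'c). ({k}, {l}, {x}))" by (auto intro!: injI)
  then show ?thesis by (simp add: face_params_3 card_image card_cartesian_product flip: UNIV_Times_UNIV)
qed

lemma inj_facet_param: "inj facet_param"
proof (rule injI)
  fix i j :: "'a + 'b + 'c" assume "facet_param i = facet_param j"
  then have "{k. Inl k \<noteq> i} = {k. Inl k \<noteq> j}" "{l. Inr (Inl l) \<noteq> i} = {l. Inr (Inl l) \<noteq> j}"
    "{x. Inr (Inr x) \<noteq> i} = {x. Inr (Inr x) \<noteq> j}"
    by (simp_all add: facet_param_def)
  note eqs = this
  then show "i = j"
  proof (cases i)
    case (Inr r)
    then show ?thesis using eqs by (cases r) (auto simp: set_eq_iff)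
  qed (auto simp: set_eq_iff)
qed

lemma face_params_facets:
  assumes "2 \<le> CARD('a::finite)" "2 \<le> CARD('b::finite)" "2 \<le> CARD('c::finite)"
  shows "face_params (CARD('a) + CARD('b) + CARD('c) - 1) = range (facet_param :: 'a + 'b + 'c \<Rightarrow> _)"
proof (intro antisym subsetI)
  fix t :: "'a set \<times> 'b set \<times> 'c set"
  assume "t \<in> face_params (CARD('a) + CARD('b) + CARD('c) - 1)"
  then obtain A B X where t: "t = (A, B, X)"
    and sum: "card A + card B + card X = CARD('a) + CARD('b) + CARD('c) - 1"
    by (auto simp: face_params_def)
  have "card A \<le> CARD('a)" "card B \<le> CARD('b)" "card X \<le> CARD('c)"
    by (simp_all add: card_mono)
  then have "card (- A) + card (- B) + card (- X) = 1"
    using sum assms by (simp add: card_Compl_finite)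
  then consider "card (- A) = 1" "- B = {}" "- X = {}" | "- A = {}" "card (- B) = 1" "- X = {}"
    | "- A = {}" "- B = {}" "card (- X) = 1"
    by (auto simp: add_is_1)
  then show "t \<in> range facet_param"
  proof cases
    case 1
    then obtain k where "- A = {k}" by (auto simp: card_1_singleton_iff)
    then have "t = facet_param (Inl k)" using 1 by (auto simp: t facet_param_def)
    then show ?thesis by blast
  next
    case 2
    then obtain l where "- B = {l}" by (auto simp: card_1_singleton_iff)
    then have "t = facet_param (Inr (Inl l))" using 2 by (auto simp: t facet_param_def)
    then show ?thesis by blast
  next
    case 3
    then obtain x where "- X = {x}" by (auto simp: card_1_singleton_iff)
    then have "t = facet_param (Inr (Inr x))" using 3 by (auto simp: t facet_param_def)
    then show ?thesis by blast
  qed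
next
  fix t assume "t \<in> range (facet_param :: 'a + 'b + 'c \<Rightarrow> _)"
  then obtain i where t: "t = facet_param i" by blast
  have "{k. Inl k \<noteq> i} = - {k. Inl k = i}" "{l. Inr (Inl l) \<noteq> i} = - {l. Inr (Inl l) = i}"
    "{x. Inr (Inr x) \<noteq> i} = - {x. Inr (Inr x) = i}"
    by auto
  moreover have "card {k. Inl k = i} + card {l. Inr (Inl l) = i} + card {x. Inr (Inr x) = i} = 1"
  proof (cases i)
    case (Inr r)
    then show ?thesis by (cases r) auto
  qed auto
  ultimately show "t \<in> face_params (CARD('a) + CARD('b) + CARD('c) - 1)"
    using assms by (auto simp: t facet_param_def face_params_def card_Compl_finite)
qed

lemma convex_cone_pos_cone: "convex_cone (pos_cone a I)"
  unfolding convex_cone_iff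
proof (intro conjI ballI allI impI)
  show "0 \<in> pos_cone a I"
    unfolding pos_cone_def by (intro CollectI exI[of _ "\<lambda>_. 0"]) simp
next
  fix x y assume "x \<in> pos_cone a I" "y \<in> pos_cone a I"
  then obtain c d where "x = (\<Sum>k\<in>I. c k *\<^sub>R a k)" "\<forall>k\<in>I. 0 \<le> c k"
    and "y = (\<Sum>k\<in>I. d k *\<^sub>R a k)" "\<forall>k\<in>I. 0 \<le> d k"
    by (auto simp: pos_cone_def)
  then show "x + y \<in> pos_cone a I"
    unfolding pos_cone_def
    by (intro CollectI exI[of _ "\<lambda>k. c k + d k"]) (auto simp: sum.distrib scaleR_add_left)
next
  fix x and r :: real assume "x \<in> pos_cone a I" "0 \<le> r"
  then obtain c where "x = (\<Sum>k\<in>I. c k *\<^sub>R a k)" "\<forall>k\<in>I. 0 \<le> c k"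
    by (auto simp: pos_cone_def)
  with \<open>0 \<le> r\<close> show "r *\<^sub>R x \<in> pos_cone a I"
    unfolding pos_cone_def by (intro CollectI exI[of _ "\<lambda>k. r * c k"]) (auto simp: scaleR_sum_right)
qed

lemma generator_in_pos_cone:
  assumes "finite I" "k \<in> I"
  shows "a k \<in> pos_cone a I"
proof -
  have "(\<Sum>j\<in>I. (if j = k then 1 else 0) *\<^sub>R a j) = (\<Sum>j\<in>I. if j = k then a j else 0)"
    by (rule sum.cong) auto
  also have "\<dots> = a k" using assms by (simp add: sum.delta')
  finally show ?thesis
    unfolding pos_cone_def by (intro CollectI exI[of _ "\<lambda>j. if j = k then 1 else 0"]) auto
qed

lemma convex_cone_sum: "convex_cone S \<Longrightarrow> (\<And>i. i \<in> I \<Longrightarrow> x i \<in> S) \<Longrightarrow> sum x I \<in> S"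
  by (induction I rule: infinite_finite_induct) (auto intro: convex_cone_add convex_cone_contains_0)

lemma pos_cone_subset: "convex_cone S \<Longrightarrow> (\<And>k. k \<in> I \<Longrightarrow> a k \<in> S) \<Longrightarrow> pos_cone a I \<subseteq> S"
  by (auto simp: pos_cone_def intro!: convex_cone_sum convex_cone_scaleR)

lemma aff_dim_coord_subspace: "aff_dim {y::real^'n. \<forall>m. m \<notin> M \<longrightarrow> y $ m = 0} = int (card M)"
proof -
  have "aff_dim {y::real^'n. \<forall>m. m \<notin> M \<longrightarrow> y $ m = 0} = int (dim {y::real^'n. \<forall>m. m \<notin> M \<longrightarrow> y $ m = 0})"
    by (simp add: aff_dim_zero hull_inc)
  also have "dim {y::real^'n. \<forall>m. m \<notin> M \<longrightarrow> y $ m = 0} = card M"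
    using dim_substandard_cart[where 'a = real and d = M] by (simp only: dim_vec_eq)
  finally show ?thesis .
qed

lemma aff_dim_cone_Int_level:
  fixes G :: "'v::euclidean_space set" and h :: "'v \<Rightarrow> real"
  assumes h: "linear h" and G: "convex_cone G" and pos: "\<And>x. x \<in> G \<Longrightarrow> x \<noteq> 0 \<Longrightarrow> 0 < h x"
  shows "aff_dim (G \<inter> {x. h x = 1}) = aff_dim G - 1"
proof -
  let ?S = "G \<inter> {x. h x = 1}"
  have "affine {x. h x = 1}"
    using h by (simp add: affine_def linear_add linear_scale flip: distrib_right)
  then have "affine hull ?S \<subseteq> {x. h x = 1}" by (intro hull_minimal) auto
  then have "0 \<notin> affine hull ?S" using h by (auto simp: linear_0)
  then have "aff_dim (insert 0 ?S) = aff_dim ?S + 1" by (simp add: aff_dim_insert)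
  moreover have "span (insert 0 ?S) = span G"
  proof (rule antisym)
    show "span (insert 0 ?S) \<subseteq> span G"
      using convex_cone_contains_0[OF G] by (intro span_minimal) (auto intro: span_base)
    have "x \<in> span (insert 0 ?S)" if "x \<in> G" for x
    proof (cases "x = 0")
      case False
      then have "0 < h x" using pos that by blast
      then have "(1 / h x) *\<^sub>R x \<in> ?S"
        using convex_cone_scaleR[OF G, of "1 / h x" x] that h by (simp add: linear_scale)
      then have "h x *\<^sub>R ((1 / h x) *\<^sub>R x) \<in> span (insert 0 ?S)" by (intro span_mul span_base) auto
      then show ?thesis using \<open>0 < h x\<close> by simp
    qed (simp add: span_zero)
    then show "span G \<subseteq> span (insert 0 ?S)" by (intro span_minimal) auto
  qed
  then have "dim (insert 0 ?S) = dim G" by (metis dim_span)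
  moreover have "aff_dim (insert 0 ?S) = int (dim (insert 0 ?S))" by (simp add: aff_dim_zero hull_inc)
  moreover have "aff_dim G = int (dim G)" by (simp add: aff_dim_zero hull_inc convex_cone_contains_0[OF G])
  ultimately show ?thesis by simp
qed

section \<open>The product of simplices\<close>

definition simplex_coord :: "('a::finite + 'b::finite) + 2 \<Rightarrow> (real^2) \<times> (real^'a) \<times> (real^'b) \<Rightarrow> real" where
  "simplex_coord c z = (case c of Inl (Inl k) \<Rightarrow> fst (snd z) $ k | Inl (Inr l) \<Rightarrow> snd (snd z) $ l
     | Inr x \<Rightarrow> fst z $ x)"

definition simplex_planes :: "((real^2) \<times> (real^'a::finite) \<times> (real^'b::finite)) set" where
  "simplex_planes = {z. sum (($) (fst z)) UNIV = 1 \<and> sum (($) (fst (snd z))) UNIV = 1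
     \<and> sum (($) (snd (snd z))) UNIV = 1}"

definition simplices_face :: "'a::finite set \<Rightarrow> 'b::finite set \<Rightarrow> 2 set \<Rightarrow> ((real^2) \<times> (real^'a) \<times> (real^'b)) set" where
  "simplices_face A B X =
     tight_face simplex_planes (\<lambda>c z. - simplex_coord c z) (\<lambda>_. 0) UNIV (- ((A <+> B) <+> X))"

definition simplices_vertex :: "'a::finite \<Rightarrow> 'b::finite \<Rightarrow> 2 \<Rightarrow> (real^2) \<times> (real^'a) \<times> (real^'b)" where
  "simplices_vertex k l x = (axis x 1, axis k 1, axis l 1)"

lemma linear_simplex_coord: "linear (\<lambda>z. - simplex_coord c z)"
  by (rule linearI) (auto simp: simplex_coord_def split: sum.split)

lemma affine_simplex_planes: "affine simplex_planes"
  unfolding affine_def simplex_planes_def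
  by (auto simp: sum.distrib simp flip: sum_distrib_left)

lemma mem_simplices_face:
  "z \<in> simplices_face A B X \<longleftrightarrow>
     z \<in> std_simplex \<times> std_simplex \<times> std_simplex \<and> (\<forall>x. x \<notin> X \<longrightarrow> fst z $ x = 0)
     \<and> (\<forall>k. k \<notin> A \<longrightarrow> fst (snd z) $ k = 0) \<and> (\<forall>l. l \<notin> B \<longrightarrow> snd (snd z) $ l = 0)"
proof -
  have "(\<forall>c. 0 \<le> simplex_coord c z) \<longleftrightarrow>
      (\<forall>k. 0 \<le> fst (snd z) $ k) \<and> (\<forall>l. 0 \<le> snd (snd z) $ l) \<and> (\<forall>x. 0 \<le> fst z $ x)"
    by (subst split_sum_all, subst split_sum_all) (simp add: simplex_coord_def)
  moreover have "(\<forall>c\<in>- ((A <+> B) <+> X). simplex_coord c z = 0) \<longleftrightarrow>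
      (\<forall>k. k \<notin> A \<longrightarrow> fst (snd z) $ k = 0) \<and> (\<forall>l. l \<notin> B \<longrightarrow> snd (snd z) $ l = 0)
      \<and> (\<forall>x. x \<notin> X \<longrightarrow> fst z $ x = 0)"
    unfolding Ball_def Compl_iff by (subst split_sum_all, subst split_sum_all) (simp add: simplex_coord_def)
  ultimately show ?thesis
    by (cases z) (auto simp: simplices_face_def tight_face_def simplex_planes_def std_simplex_def)
qed

lemma simplices_face_UNIV:
  "simplices_face UNIV UNIV UNIV = std_simplex \<times> std_simplex \<times> std_simplex"
  by (auto simp: mem_simplices_face)

lemma simplices_face_mono:
  "A \<subseteq> A' \<Longrightarrow> B \<subseteq> B' \<Longrightarrow> X \<subseteq> X' \<Longrightarrow> simplices_face A B X \<subseteq> simplices_face A' B' X'"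
  unfolding simplices_face_def by (rule tight_face_mono) auto

lemma simplices_face_degenerate: "A = {} \<or> B = {} \<or> X = {} \<Longrightarrow> simplices_face A B X = {}"
  by (auto simp: mem_simplices_face std_simplex_def)

lemma simplices_vertex_mem_simplices_face:
  "simplices_vertex k l x \<in> simplices_face A B X \<longleftrightarrow> k \<in> A \<and> l \<in> B \<and> x \<in> X"
  by (auto simp: mem_simplices_face simplices_vertex_def std_simplex_def axis_def)

lemma simplices_face_subset_iff:
  "simplices_face A B X \<subseteq> simplices_face A' B' X' \<longleftrightarrow>
     A = {} \<or> B = {} \<or> X = {} \<or> (A \<subseteq> A' \<and> B \<subseteq> B' \<and> X \<subseteq> X')"
  by (rule param_subset_iff[where q = simplices_vertex, OF simplices_vertex_mem_simplices_face
        simplices_face_degenerate simplices_face_mono])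

lemma faces_simplex_product:
  "{G. G face_of (std_simplex :: (real^2) set) \<times> (std_simplex :: (real^'a::finite) set)
       \<times> (std_simplex :: (real^'b::finite) set)} = range (\<lambda>(A, B, X). simplices_face A B X)"
proof -
  have "{G. G face_of (std_simplex :: (real^2) set) \<times> (std_simplex :: (real^'a) set)
       \<times> (std_simplex :: (real^'b) set)} = insert {} (range (\<lambda>(A, B, X). simplices_face A B X))"
    using faces_of_tight_face[where g = "\<lambda>c z. - simplex_coord c z", OF affine_simplex_planes
        linear_simplex_coord, where b = "\<lambda>_. 0" and I = "UNIV :: (('a + 'b) + 2) set"]
    by (simp add: simplices_face_def range_compl_Plus_Plus[of "tight_face simplex_planes _ (\<lambda>_. 0) UNIV"]
        flip: simplices_face_UNIV)
  moreover have "{} \<in> range (\<lambda>(A, B, X). simplices_face A B X)"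
    using simplices_face_degenerate[of "{}"] by (auto intro!: image_eqI[where x = "({}, {}, {})"])
  ultimately show ?thesis by (metis insert_absorb)
qed

lemma sum_UNIV_Plus:
  fixes f :: "'a::finite + 'b::finite \<Rightarrow> 'c::comm_monoid_add"
  shows "(\<Sum>m\<in>UNIV. f m) = (\<Sum>k\<in>UNIV. f (Inl k)) + (\<Sum>l\<in>UNIV. f (Inr l))"
  using sum.Plus[of "UNIV :: 'a::finite set" "UNIV :: 'b::finite set" f] by (simp add: comp_def)

lemma sum_UNIV_triple:
  "(\<Sum>k\<in>UNIV. \<Sum>l\<in>UNIV. \<Sum>x\<in>UNIV. f k l x) = (\<Sum>(k, l, x)\<in>(UNIV :: ('a::finite \<times> 'b::finite \<times> 'c::finite) set). f k l x)"
  by (simp add: sum.cartesian_product flip: UNIV_Times_UNIV)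

definition lsum :: "real^('a::finite + 'b::finite) \<Rightarrow> real" where
  "lsum y = (\<Sum>k\<in>UNIV. y $ Inl k)"

definition rsum :: "real^('a::finite + 'b::finite) \<Rightarrow> real" where
  "rsum y = (\<Sum>l\<in>UNIV. y $ Inr l)"

definition slice_plane :: "(real^('a::finite + 'b::finite)) set" where
  "slice_plane = {y. lsum y + rsum y = 1}"

lemma linear_lsum: "linear lsum"
  by (rule linearI) (simp_all add: lsum_def sum.distrib sum_distrib_left)

lemma linear_rsum: "linear rsum"
  by (rule linearI) (simp_all add: rsum_def sum.distrib sum_distrib_left)

lemmas lsum_add [simp] = linear_add[OF linear_lsum]
  and lsum_diff [simp] = linear_diff[OF linear_lsum]
  and lsum_scaleR [simp] = linear_scale[OF linear_lsum]
  and lsum_zero [simp] = linear_0[OF linear_lsum]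
  and rsum_add [simp] = linear_add[OF linear_rsum]
  and rsum_diff [simp] = linear_diff[OF linear_rsum]
  and rsum_scaleR [simp] = linear_scale[OF linear_rsum]
  and rsum_zero [simp] = linear_0[OF linear_rsum]

lemma lsum_plus_rsum: "lsum y + rsum y = (\<Sum>m\<in>UNIV. y $ m)"
  by (simp add: lsum_def rsum_def sum_UNIV_Plus)

lemma nonneg_vec_eq_0_iff:
  assumes "\<forall>m. 0 \<le> y $ m"
  shows "y = 0 \<longleftrightarrow> lsum y + rsum y = 0"
  using assms by (auto simp: lsum_plus_rsum sum_nonneg_eq_0_iff vec_eq_iff)

lemma inner_lsum_rsum:
  "(\<chi> m. case m of Inl _ \<Rightarrow> p | Inr _ \<Rightarrow> q) \<bullet> y = p * lsum y + q * rsum y"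
  by (simp add: inner_vec_def sum_UNIV_Plus lsum_def rsum_def sum_distrib_left)

lemma affine_slice_plane: "affine slice_plane"
proof -
  have "slice_plane = {y. (\<chi> m. 1) \<bullet> y = (1::real)}"
    by (simp add: slice_plane_def inner_vec_def lsum_plus_rsum)
  then show ?thesis using affine_hyperplane by metis
qed

lemma col_vec_nth [simp]:
  "col_vec ka i la j $ Inl k = (if k = ka then real i else 0)"
  "col_vec ka i la j $ Inr l = (if l = la then real j else 0)"
  by (simp_all add: col_vec_def)

lemma col_vec_nonneg [simp]: "0 \<le> col_vec ka i la j $ m"
  by (cases m) simp_all

lemma lsum_col_vec [simp]: "lsum (col_vec ka i la j) = real i"
  and rsum_col_vec [simp]: "rsum (col_vec ka i la j) = real j"
  by (simp_all add: lsum_def rsum_def)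

section \<open>The cone of the columns\<close>

locale column_cone =
  fixes e1 e2 :: nat
  assumes e1_e2: "1 < e1 * e2"
begin

lemma one_le_e1: "1 \<le> real e1" and one_le_e2: "1 \<le> real e2"
proof -
  have "e1 * e2 \<noteq> 0" using e1_e2 by linarith
  then show "1 \<le> real e1" "1 \<le> real e2" by simp_all
qed

lemma one_less_e1_e2: "1 < real e1 * real e2"
  using e1_e2 by (metis of_nat_1 of_nat_less_iff of_nat_mult)

text \<open>Constraint \<open>Inr x\<close> is the cone inequality which the extreme columns of kind \<open>x\<close>
  (see \<open>ext_col\<close>) satisfy strictly, so that a face is described by the supports \<open>A\<close>, \<open>B\<close> of
  its points together with the set \<open>X\<close> of kinds of extreme columns it contains.\<close>

definition cone_constr :: "('a::finite + 'b::finite) + 2 \<Rightarrow> real^('a + 'b) \<Rightarrow> real" where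
  "cone_constr c y = (case c of Inl m \<Rightarrow> - y $ m
     | Inr x \<Rightarrow> if x = 1 then rsum y - e2 * lsum y else lsum y - e1 * rsum y)"

definition cone_face :: "'a::finite set \<Rightarrow> 'b::finite set \<Rightarrow> 2 set \<Rightarrow> (real^('a + 'b)) set" where
  "cone_face A B X = tight_face UNIV cone_constr (\<lambda>_. 0) UNIV (- ((A <+> B) <+> X))"

definition slice_face :: "'a::finite set \<Rightarrow> 'b::finite set \<Rightarrow> 2 set \<Rightarrow> (real^('a + 'b)) set" where
  "slice_face A B X = tight_face slice_plane cone_constr (\<lambda>_. 0) UNIV (- ((A <+> B) <+> X))"

definition ext_col :: "'a::finite \<Rightarrow> 'b::finite \<Rightarrow> 2 \<Rightarrow> real^('a + 'b)" where
  "ext_col k l x = (if x = 1 then col_vec k e1 l 1 else col_vec k 1 l e2)"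

definition slice_vertex :: "'a::finite \<Rightarrow> 'b::finite \<Rightarrow> 2 \<Rightarrow> real^('a + 'b)" where
  "slice_vertex k l x = (1 / (lsum (ext_col k l x) + rsum (ext_col k l x))) *\<^sub>R ext_col k l x"

lemma linear_cone_constr: "linear (cone_constr c)"
  by (rule linearI) (auto simp: cone_constr_def algebra_simps split: sum.split)

lemma cone_constr_le_0_iff:
  "(\<forall>c. cone_constr c y \<le> 0) \<longleftrightarrow>
     (\<forall>m. 0 \<le> y $ m) \<and> lsum y \<le> e1 * rsum y \<and> rsum y \<le> e2 * lsum y"
proof -
  have "(\<forall>c. cone_constr c y \<le> 0) \<longleftrightarrow>
      (\<forall>m. cone_constr (Inl m) y \<le> 0) \<and> (\<forall>x. cone_constr (Inr x) y \<le> 0)"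
    by (rule split_sum_all)
  also have "\<dots> \<longleftrightarrow> (\<forall>m. 0 \<le> y $ m) \<and> rsum y \<le> e2 * lsum y \<and> lsum y \<le> e1 * rsum y"
    unfolding forall_2 by (simp add: cone_constr_def)
  finally show ?thesis by blast
qed

lemma cone_constr_tight_iff:
  "(\<forall>c\<in>- ((A <+> B) <+> X). cone_constr c y = 0) \<longleftrightarrow>
     (\<forall>k. k \<notin> A \<longrightarrow> y $ Inl k = 0) \<and> (\<forall>l. l \<notin> B \<longrightarrow> y $ Inr l = 0)
     \<and> (1 \<notin> X \<longrightarrow> rsum y = e2 * lsum y) \<and> (2 \<notin> X \<longrightarrow> lsum y = e1 * rsum y)"
proof -
  have "(\<forall>c\<in>- ((A <+> B) <+> X). cone_constr c y = 0) \<longleftrightarrow>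
      (\<forall>m. m \<notin> A <+> B \<longrightarrow> cone_constr (Inl m) y = 0) \<and> (\<forall>x. x \<notin> X \<longrightarrow> cone_constr (Inr x) y = 0)"
    unfolding Ball_def Compl_iff by (subst split_sum_all) simp
  also have "\<dots> \<longleftrightarrow> (\<forall>k. k \<notin> A \<longrightarrow> y $ Inl k = 0) \<and> (\<forall>l. l \<notin> B \<longrightarrow> y $ Inr l = 0)
     \<and> (1 \<notin> X \<longrightarrow> rsum y = e2 * lsum y) \<and> (2 \<notin> X \<longrightarrow> lsum y = e1 * rsum y)"
    unfolding forall_2 by (subst split_sum_all) (simp add: cone_constr_def)
  finally show ?thesis .
qed

lemma mem_cone_face:
  "y \<in> cone_face A B X \<longleftrightarrow>
     (\<forall>m. 0 \<le> y $ m) \<and> lsum y \<le> e1 * rsum y \<and> rsum y \<le> e2 * lsum y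
     \<and> (\<forall>k. k \<notin> A \<longrightarrow> y $ Inl k = 0) \<and> (\<forall>l. l \<notin> B \<longrightarrow> y $ Inr l = 0)
     \<and> (1 \<notin> X \<longrightarrow> rsum y = e2 * lsum y) \<and> (2 \<notin> X \<longrightarrow> lsum y = e1 * rsum y)"
proof -
  have "y \<in> cone_face A B X \<longleftrightarrow>
      (\<forall>c. cone_constr c y \<le> 0) \<and> (\<forall>c\<in>- ((A <+> B) <+> X). cone_constr c y = 0)"
    by (simp add: cone_face_def tight_face_def)
  then show ?thesis unfolding cone_constr_le_0_iff cone_constr_tight_iff by blast
qed

lemma slice_face_eq: "slice_face A B X = cone_face A B X \<inter> slice_plane"
  by (auto simp: slice_face_def cone_face_def tight_face_def)

lemma cone_face_UNIV:
  "cone_face UNIV UNIV UNIV = {y. (\<forall>m. 0 \<le> y $ m) \<and> lsum y \<le> e1 * rsum y \<and> rsum y \<le> e2 * lsum y}"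
  by (simp add: set_eq_iff mem_cone_face)

lemma convex_cone_cone_face: "convex_cone (cone_face A B X)"
  unfolding cone_face_def by (rule convex_cone_tight_face[OF linear_cone_constr])

lemma cone_face_mono: "A \<subseteq> A' \<Longrightarrow> B \<subseteq> B' \<Longrightarrow> X \<subseteq> X' \<Longrightarrow> cone_face A B X \<subseteq> cone_face A' B' X'"
  unfolding cone_face_def by (rule tight_face_mono) auto

lemma cone_face_degenerate:
  assumes "A = {} \<or> B = {} \<or> X = {}"
  shows "cone_face A B X = {0}"
proof (intro antisym subsetI)
  fix y assume y: "y \<in> cone_face A B X"
  have nonneg: "\<forall>m. 0 \<le> y $ m" and le1: "lsum y \<le> e1 * rsum y" and le2: "rsum y \<le> e2 * lsum y"
    using y by (simp_all add: mem_cone_face)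
  have "0 \<le> lsum y" "0 \<le> rsum y" using nonneg by (simp_all add: lsum_def rsum_def sum_nonneg)
  have "lsum y = 0 \<or> rsum y = 0 \<or> (lsum y = e1 * rsum y \<and> rsum y = e2 * lsum y)"
    using assms y by (auto simp: mem_cone_face lsum_def rsum_def)
  then have "lsum y = 0 \<and> rsum y = 0"
  proof (elim disjE conjE)
    assume "lsum y = 0" then show ?thesis using le2 \<open>0 \<le> rsum y\<close> by simp
  next
    assume "rsum y = 0" then show ?thesis using le1 \<open>0 \<le> lsum y\<close> by simp
  next
    assume eqs: "lsum y = e1 * rsum y" "rsum y = e2 * lsum y"
    then have "lsum y = e1 * (e2 * lsum y)" by metis
    have "(real e1 * real e2 - 1) * lsum y = e1 * (e2 * lsum y) - lsum y"
      by (simp add: algebra_simps)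
    also have "\<dots> = 0" using \<open>lsum y = e1 * (e2 * lsum y)\<close> by linarith
    finally have "lsum y = 0" using one_less_e1_e2 by simp
    then show ?thesis using eqs(2) by simp
  qed
  then show "y \<in> {0}" using nonneg_vec_eq_0_iff[OF nonneg] by simp
qed (simp add: convex_cone_contains_0[OF convex_cone_cone_face])

lemma slice_face_degenerate: "A = {} \<or> B = {} \<or> X = {} \<Longrightarrow> slice_face A B X = {}"
  by (simp add: slice_face_eq cone_face_degenerate slice_plane_def)

lemma ext_col_mem_cone_face: "ext_col k l x \<in> cone_face A B X \<longleftrightarrow> k \<in> A \<and> l \<in> B \<and> x \<in> X"
proof (cases "x = 1")
  case True
  have "1 < real e2 * real e1" using one_less_e1_e2 by (simp add: mult.commute)
  then show ?thesis using True one_le_e1 by (auto simp: mem_cone_face ext_col_def)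
next
  case False
  then have "x = 2" using exhaust_2 by blast
  have "real e1 * real e2 \<noteq> 1" using one_less_e1_e2 by simp
  then show ?thesis
    using False \<open>x = 2\<close> one_le_e2 one_less_e1_e2 by (auto simp: mem_cone_face ext_col_def mult.commute)
qed

lemma cone_face_scaleR_iff: "0 < c \<Longrightarrow> c *\<^sub>R y \<in> cone_face A B X \<longleftrightarrow> y \<in> cone_face A B X"
  using convex_cone_scaleR[OF convex_cone_cone_face, of c y A B X]
    convex_cone_scaleR[OF convex_cone_cone_face, of "1 / c" "c *\<^sub>R y" A B X]
  by auto

lemma slice_face_mono: "A \<subseteq> A' \<Longrightarrow> B \<subseteq> B' \<Longrightarrow> X \<subseteq> X' \<Longrightarrow> slice_face A B X \<subseteq> slice_face A' B' X'"
  using cone_face_mono[of A A' B B' X X'] by (auto simp: slice_face_eq)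

lemma slice_vertex_mem_slice_face:
  "slice_vertex k l x \<in> slice_face A B X \<longleftrightarrow> k \<in> A \<and> l \<in> B \<and> x \<in> X"
proof -
  let ?h = "lsum (ext_col k l x) + rsum (ext_col k l x)"
  have "0 < ?h" using one_le_e1 one_le_e2 by (simp add: ext_col_def)
  then have "slice_vertex k l x \<in> slice_plane"
    by (simp add: slice_vertex_def slice_plane_def add_divide_distrib[symmetric])
  then show ?thesis
    using \<open>0 < ?h\<close> by (simp add: slice_face_eq slice_vertex_def cone_face_scaleR_iff ext_col_mem_cone_face)
qed

lemma slice_face_subset_iff:
  "slice_face A B X \<subseteq> slice_face A' B' X' \<longleftrightarrow>
     A = {} \<or> B = {} \<or> X = {} \<or> (A \<subseteq> A' \<and> B \<subseteq> B' \<and> X \<subseteq> X')"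
  by (rule param_subset_iff[where q = slice_vertex,
        OF slice_vertex_mem_slice_face slice_face_degenerate slice_face_mono])

lemma cone_face_inj:
  assumes "A \<noteq> {}" "B \<noteq> {}" "X \<noteq> {}" "A' \<noteq> {}" "B' \<noteq> {}" "X' \<noteq> {}"
    and "cone_face A B X = cone_face A' B' X'"
  shows "A = A' \<and> B = B' \<and> X = X'"
proof -
  have "slice_face A B X = slice_face A' B' X'" using assms(7) by (simp add: slice_face_eq)
  then show ?thesis using assms(1-6) slice_face_subset_iff by (metis subset_antisym order_refl)
qed

lemma cone_face_UNIV_decomp:
  assumes y: "y \<in> cone_face UNIV UNIV UNIV"
  obtains c where "\<And>k l x. 0 \<le> c k l x"
    and "y = (\<Sum>(k, l, x)\<in>UNIV. c k l x *\<^sub>R ext_col k l x)"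
proof (cases "y = 0")
  case True
  then show ?thesis using that[of "\<lambda>_ _ _. 0"] by simp
next
  case False
  have nonneg: "\<forall>m. 0 \<le> y $ m" and le1: "lsum y \<le> e1 * rsum y" and le2: "rsum y \<le> e2 * lsum y"
    using y by (simp_all add: mem_cone_face)
  define s where "s = lsum y"
  define t where "t = rsum y"
  have "0 \<le> s" "0 \<le> t" using nonneg by (simp_all add: s_def t_def lsum_def rsum_def sum_nonneg)
  moreover have "s + t \<noteq> 0" using False nonneg_vec_eq_0_iff[OF nonneg] by (simp add: s_def t_def)
  ultimately have "0 < s" "0 < t"
    using le1 le2 by (auto simp: s_def t_def less_le)
  define D where "D = real e1 * real e2 - 1"
  have "0 < D" using one_less_e1_e2 by (simp add: D_def)
  text \<open>Write \<open>(s, t) = \<alpha> (e1, 1) + \<beta> (1, e2)\<close>; the inequalities of the cone say \<open>\<alpha>, \<beta> \<ge> 0\<close>.\<close>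
  define \<alpha> where "\<alpha> = (e2 * s - t) / D"
  define \<beta> where "\<beta> = (e1 * t - s) / D"
  have "0 \<le> \<alpha>" "0 \<le> \<beta>" using le1 le2 \<open>0 < D\<close> by (simp_all add: \<alpha>_def \<beta>_def s_def t_def)
  have "(e2 * s - t) * e1 + (e1 * t - s) = s * D" "(e2 * s - t) + (e1 * t - s) * e2 = t * D"
    by (simp_all add: D_def algebra_simps)
  then have s_eq: "\<alpha> * e1 + \<beta> = s" and t_eq: "\<alpha> + \<beta> * e2 = t"
    using \<open>0 < D\<close> by (simp_all add: \<alpha>_def \<beta>_def add_divide_distrib[symmetric])
  define w where "w k l = y $ Inl k * y $ Inr l / (s * t)" for k l
  define c where "c k l x = w k l * (if x = 1 then \<alpha> else \<beta>)" for k l and x :: 2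
  have "0 \<le> c k l x" for k l x
    using nonneg \<open>0 < s\<close> \<open>0 < t\<close> \<open>0 \<le> \<alpha>\<close> \<open>0 \<le> \<beta>\<close> by (simp add: c_def w_def)
  moreover have "y = (\<Sum>k\<in>UNIV. \<Sum>l\<in>UNIV. \<Sum>x\<in>UNIV. c k l x *\<^sub>R ext_col k l x)"
  proof (subst vec_eq_iff, intro allI)
    fix m
    show "y $ m = (\<Sum>k\<in>UNIV. \<Sum>l\<in>UNIV. \<Sum>x\<in>UNIV. c k l x *\<^sub>R ext_col k l x) $ m"
    proof (cases m)
      case (Inl k0)
      have "(\<Sum>l\<in>UNIV. \<Sum>x\<in>UNIV. c k l x * ext_col k l x $ Inl k0)
          = (if k = k0 then (\<Sum>l\<in>UNIV. w k l * s) else 0)" for k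
        by (cases "k = k0") (simp_all add: c_def ext_col_def sum_2 algebra_simps flip: s_eq)
      then have "(\<Sum>k\<in>UNIV. \<Sum>l\<in>UNIV. \<Sum>x\<in>UNIV. c k l x *\<^sub>R ext_col k l x) $ m = (\<Sum>l\<in>UNIV. w k0 l * s)"
        by (simp add: Inl)
      also have "\<dots> = y $ Inl k0 * (\<Sum>l\<in>UNIV. y $ Inr l) / t"
        using \<open>0 < s\<close> by (simp add: w_def sum_distrib_left sum_divide_distrib)
      also have "\<dots> = y $ m" using \<open>0 < t\<close> by (simp add: Inl t_def rsum_def)
      finally show ?thesis ..
    next
      case (Inr l0)
      have "(\<Sum>l\<in>UNIV. \<Sum>x\<in>UNIV. c k l x * ext_col k l x $ Inr l0) = w k l0 * t" for k
        by (simp add: c_def ext_col_def sum_2 algebra_simps if_distrib flip: t_eq cong: if_cong)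
      then have "(\<Sum>k\<in>UNIV. \<Sum>l\<in>UNIV. \<Sum>x\<in>UNIV. c k l x *\<^sub>R ext_col k l x) $ m = (\<Sum>k\<in>UNIV. w k l0 * t)"
        by (simp add: Inr)
      also have "\<dots> = y $ Inr l0 * (\<Sum>k\<in>UNIV. y $ Inl k) / s"
        using \<open>0 < t\<close> by (simp add: w_def sum_distrib_left sum_divide_distrib mult.commute)
      also have "\<dots> = y $ m" using \<open>0 < s\<close> by (simp add: Inr s_def lsum_def)
      finally show ?thesis ..
    qed
  qed
  ultimately show ?thesis using that[of c] by (simp add: sum_UNIV_triple)
qed

lemma pos_cone_columns:
  "pos_cone (\<lambda>(k :: 'a::finite, i, l :: 'b::finite, j). col_vec k i l j) {(k, i, l, j). i \<in> {1..e1} \<and> j \<in> {1..e2}}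
     = cone_face UNIV UNIV UNIV"
  (is "pos_cone ?a ?I = _")
proof
  show "pos_cone ?a ?I \<subseteq> cone_face UNIV UNIV UNIV"
  proof (rule pos_cone_subset[OF convex_cone_cone_face])
    fix t assume "t \<in> ?I"
    then obtain k i l j where t: "t = (k, i, l, j)" "1 \<le> i" "i \<le> e1" "1 \<le> j" "j \<le> e2" by auto
    have "real e1 \<le> real e1 * real j" "real e2 \<le> real e2 * real i" using t by simp_all
    moreover have "real i \<le> real e1" "real j \<le> real e2" using t by simp_all
    ultimately have "real i \<le> real e1 * real j" "real j \<le> real e2 * real i" by linarith+
    then show "?a t \<in> cone_face UNIV UNIV UNIV"
      by (simp add: t mem_cone_face)
  qed
  show "cone_face UNIV UNIV UNIV \<subseteq> pos_cone ?a ?I"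
  proof
    fix y :: "real^('a + 'b)" assume "y \<in> cone_face UNIV UNIV UNIV"
    then obtain c where c: "\<And>k l x. 0 \<le> c k l x"
      and y: "y = (\<Sum>(k, l, x)\<in>UNIV. c k l x *\<^sub>R ext_col k l x)"
      using cone_face_UNIV_decomp by blast
    have "finite ?I"
      by (rule finite_subset[of _ "UNIV \<times> {1..e1} \<times> UNIV \<times> {1..e2}"]) auto
    moreover have "1 \<le> e1" "1 \<le> e2" using one_le_e1 one_le_e2 by simp_all
    ultimately have "ext_col k l x \<in> pos_cone ?a ?I" for k l x
      using generator_in_pos_cone[of ?I "(k, e1, l, 1)" ?a]
        generator_in_pos_cone[of ?I "(k, 1, l, e2)" ?a]
      by (auto simp: ext_col_def)
    then show "y \<in> pos_cone ?a ?I"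
      unfolding y using c
      by (intro convex_cone_sum[OF convex_cone_pos_cone])
        (auto intro!: convex_cone_scaleR[OF convex_cone_pos_cone])
  qed
qed

lemma faces_cone_face_UNIV:
  "{F. F face_of cone_face UNIV UNIV UNIV} = insert {} (range (\<lambda>(A, B, X). cone_face A B X))"
  using faces_of_tight_face[where g = cone_constr, OF affine_UNIV linear_cone_constr, where b = "\<lambda>_. 0"
      and I = "UNIV :: (('a + 'b) + 2) set"]
  by (simp add: cone_face_def range_compl_Plus_Plus[of "tight_face UNIV cone_constr (\<lambda>_. 0) UNIV"])

lemma faces_slice_face_UNIV:
  "{F. F face_of slice_face (UNIV :: 'a::finite set) (UNIV :: 'b::finite set) UNIV}
     = range (\<lambda>(A, B, X). slice_face A B X)"
proof -
  have "{F. F face_of slice_face (UNIV :: 'a set) (UNIV :: 'b set) UNIV} = insert {} (range (\<lambda>(A, B, X). slice_face A B X))"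
    using faces_of_tight_face[where g = cone_constr, OF affine_slice_plane linear_cone_constr, where b = "\<lambda>_. 0"
      and I = "UNIV :: (('a + 'b) + 2) set"]
    by (simp add: slice_face_def range_compl_Plus_Plus[of "tight_face slice_plane cone_constr (\<lambda>_. 0) UNIV"])
  moreover have "{} \<in> range (\<lambda>(A, B, X). slice_face A B X)"
    using slice_face_degenerate[of "{}"] by (auto intro!: image_eqI[where x = "({}, {}, {})"])
  ultimately show ?thesis by (metis insert_absorb)
qed

definition face_subspace :: "'a::finite set \<Rightarrow> 'b::finite set \<Rightarrow> 2 set \<Rightarrow> (real^('a + 'b)) set" where
  "face_subspace A B X = {y. \<forall>c\<in>- ((A <+> B) <+> X). cone_constr c y = 0}"

lemma subspace_face_subspace: "subspace (face_subspace A B X)"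
  by (auto simp: subspace_def face_subspace_def linear_add[OF linear_cone_constr]
      linear_scale[OF linear_cone_constr] linear_0[OF linear_cone_constr])

lemma aff_dim_face_subspace:
  assumes "A \<noteq> {}" "B \<noteq> {}" "X \<noteq> {}"
  shows "aff_dim (face_subspace A B X) = int (card A + card B + card X) - 2"
proof -
  define Z where "Z = {y::real^('a + 'b). \<forall>m. m \<notin> A <+> B \<longrightarrow> y $ m = 0}"
  have "aff_dim Z = int (card A + card B)"
    by (simp add: Z_def aff_dim_coord_subspace card_Plus)
  have Z_iff: "y \<in> Z \<longleftrightarrow> (\<forall>k. k \<notin> A \<longrightarrow> y $ Inl k = 0) \<and> (\<forall>l. l \<notin> B \<longrightarrow> y $ Inr l = 0)" for y
    unfolding Z_def by (subst split_sum_all) simp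
  have W_iff: "y \<in> face_subspace A B X \<longleftrightarrow> y \<in> Z
      \<and> (1 \<notin> X \<longrightarrow> rsum y = e2 * lsum y) \<and> (2 \<notin> X \<longrightarrow> lsum y = e1 * rsum y)" for y
    by (simp add: face_subspace_def cone_constr_tight_iff Z_iff)
  text \<open>Each equation between \<open>lsum\<close> and \<open>rsum\<close> cuts \<open>Z\<close> by a hyperplane not containing it.\<close>
  have cut: "aff_dim (Z \<inter> {y. (\<chi> m. case m of Inl _ \<Rightarrow> p | Inr _ \<Rightarrow> q) \<bullet> y = 0}) = aff_dim Z - 1"
    if "p \<noteq> 0 \<or> q \<noteq> 0" for p q :: real
  proof -
    obtain k l where "k \<in> A" "l \<in> B" using assms by blast
    then have Z_axis: "axis (Inl k) 1 \<in> Z" "axis (Inr l) 1 \<in> Z" by (auto simp: Z_iff axis_def)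
    have "\<not> Z \<subseteq> {y. (\<chi> m. case m of Inl _ \<Rightarrow> p | Inr _ \<Rightarrow> q) \<bullet> y = 0}"
    proof
      assume sub: "Z \<subseteq> {y. (\<chi> m. case m of Inl _ \<Rightarrow> p | Inr _ \<Rightarrow> q) \<bullet> y = 0}"
      have "p = 0" "q = 0"
        using subsetD[OF sub Z_axis(1)] subsetD[OF sub Z_axis(2)]
        by (simp_all add: inner_lsum_rsum lsum_def rsum_def axis_def)
      with that show False by simp
    qed
    moreover have "affine Z" "0 \<in> Z" by (simp_all add: Z_def affine_def algebra_simps)
    ultimately show ?thesis by (subst aff_dim_affine_Int_hyperplane) auto
  qed
  from subset_2_cases[OF assms(3)] show ?thesis
  proof (elim disjE)
    assume "X = {1}"
    have "face_subspace A B X = Z \<inter> {y. (\<chi> m. case m of Inl _ \<Rightarrow> 1 | Inr _ \<Rightarrow> - real e1) \<bullet> y = 0}"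
      unfolding set_eq_iff W_iff using \<open>X = {1}\<close> by (auto simp: inner_lsum_rsum)
    then show ?thesis using cut[of 1] \<open>aff_dim Z = _\<close> \<open>X = {1}\<close> by simp
  next
    assume "X = {2}"
    have "face_subspace A B X = Z \<inter> {y. (\<chi> m. case m of Inl _ \<Rightarrow> - real e2 | Inr _ \<Rightarrow> 1) \<bullet> y = 0}"
      unfolding set_eq_iff W_iff using \<open>X = {2}\<close> by (auto simp: inner_lsum_rsum)
    then show ?thesis using cut[of _ 1] \<open>aff_dim Z = _\<close> \<open>X = {2}\<close> by simp
  next
    assume "X = UNIV"
    have "face_subspace A B X = Z" unfolding set_eq_iff W_iff using \<open>X = UNIV\<close> by simp
    then show ?thesis using \<open>aff_dim Z = _\<close> \<open>X = UNIV\<close> by simp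
  qed
qed

lemma cone_face_subset_face_subspace: "cone_face A B X \<subseteq> face_subspace A B X"
  by (auto simp: cone_face_def face_subspace_def tight_face_def)

lemma aff_dim_cone_face:
  assumes "A \<noteq> {}" "B \<noteq> {}" "X \<noteq> {}"
  shows "aff_dim (cone_face A B X) = int (card A + card B + card X) - 2"
proof -
  text \<open>A point of the relative interior: weight \<open>\<alpha>\<close> spread evenly over \<open>A\<close> and \<open>\<beta>\<close> over \<open>B\<close>,
    with \<open>(\<alpha>, \<beta>)\<close> the sum of the kinds \<open>(e1, 1)\<close>, \<open>(1, e2)\<close> of extreme columns in \<open>X\<close>.\<close>
  define \<alpha> where "\<alpha> = (if 1 \<in> X then real e1 else 0) + (if 2 \<in> X then 1 else 0)"
  define \<beta> where "\<beta> = (if 1 \<in> X then 1 else 0) + (if 2 \<in> X then real e2 else 0)"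
  define p :: "real^('a + 'b)" where
    "p = (\<chi> m. case m of Inl k \<Rightarrow> if k \<in> A then \<alpha> / card A else 0
                      | Inr l \<Rightarrow> if l \<in> B then \<beta> / card B else 0)"
  define U :: "(real^('a + 'b)) set" where
    "U = (\<Inter>k\<in>A. {y. 0 < y $ Inl k}) \<inter> (\<Inter>l\<in>B. {y. 0 < y $ Inr l})
       \<inter> {y. 1 \<in> X \<longrightarrow> rsum y < e2 * lsum y} \<inter> {y. 2 \<in> X \<longrightarrow> lsum y < e1 * rsum y}"
  have "open U"
    unfolding U_def lsum_def rsum_def
    by (intro open_Int open_INT ballI open_Collect_imp open_Collect_less closed_Collect_const
        continuous_intros) auto
  have "lsum p = \<alpha>" "rsum p = \<beta>"
    using assms by (simp_all add: p_def lsum_def rsum_def sum.If_cases)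
  have "0 < \<alpha>" "0 < \<beta>" "1 \<in> X \<longrightarrow> \<beta> < e2 * \<alpha>" "2 \<in> X \<longrightarrow> \<alpha> < e1 * \<beta>"
    "1 \<notin> X \<longrightarrow> \<beta> = e2 * \<alpha>" "2 \<notin> X \<longrightarrow> \<alpha> = e1 * \<beta>"
    using subset_2_cases[OF assms(3)] one_le_e1 one_le_e2 one_less_e1_e2
    by (auto simp: \<alpha>_def \<beta>_def algebra_simps)
  then have "p \<in> face_subspace A B X" "p \<in> U"
    using assms \<open>lsum p = \<alpha>\<close> \<open>rsum p = \<beta>\<close>
    by (simp_all add: face_subspace_def cone_constr_tight_iff U_def p_def card_gt_0_iff)
  moreover have "face_subspace A B X \<inter> U \<subseteq> cone_face A B X"
  proof
    fix y assume "y \<in> face_subspace A B X \<inter> U"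
    then have W: "\<forall>k. k \<notin> A \<longrightarrow> y $ Inl k = 0" "\<forall>l. l \<notin> B \<longrightarrow> y $ Inr l = 0"
        "1 \<notin> X \<longrightarrow> rsum y = e2 * lsum y" "2 \<notin> X \<longrightarrow> lsum y = e1 * rsum y"
      and U: "\<forall>k\<in>A. 0 < y $ Inl k" "\<forall>l\<in>B. 0 < y $ Inr l"
        "1 \<in> X \<longrightarrow> rsum y < e2 * lsum y" "2 \<in> X \<longrightarrow> lsum y < e1 * rsum y"
      by (simp_all only: face_subspace_def cone_constr_tight_iff U_def Int_iff mem_Collect_eq INT_iff)
        blast+
    have "0 \<le> y $ Inl k" "0 \<le> y $ Inr l" for k l
      using W(1,2) U(1,2) by (metis less_imp_le order_refl)+
    then have "\<forall>m. 0 \<le> y $ m" by (simp add: split_sum_all)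
    moreover have "lsum y \<le> e1 * rsum y" "rsum y \<le> e2 * lsum y"
      using W(3,4) U(3,4) by (metis less_imp_le order_refl)+
    ultimately show "y \<in> cone_face A B X"
      using W unfolding mem_cone_face by blast
  qed
  ultimately have "aff_dim (face_subspace A B X) \<le> aff_dim (cone_face A B X)"
    using aff_dim_convex_Int_open[OF subspace_imp_convex[OF subspace_face_subspace] \<open>open U\<close>]
      aff_dim_subset by (metis IntI empty_iff)
  moreover have "aff_dim (cone_face A B X) \<le> aff_dim (face_subspace A B X)"
    by (rule aff_dim_subset[OF cone_face_subset_face_subspace])
  ultimately show ?thesis using aff_dim_face_subspace[OF assms] by simp
qed

lemma cone_face_nonzero_pos: "y \<in> cone_face A B X \<Longrightarrow> y \<noteq> 0 \<Longrightarrow> 0 < lsum y + rsum y"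
  using nonneg_vec_eq_0_iff[of y]
  by (auto simp: mem_cone_face lsum_plus_rsum sum_nonneg less_le)

lemma aff_dim_slice_face:
  assumes "A \<noteq> {}" "B \<noteq> {}" "X \<noteq> {}"
  shows "aff_dim (slice_face A B X) = int (card A + card B + card X) - 3"
proof -
  have "slice_face A B X = cone_face A B X \<inter> {y. lsum y + rsum y = 1}"
    by (simp add: slice_face_eq slice_plane_def)
  also have "aff_dim \<dots> = aff_dim (cone_face A B X) - 1"
    by (rule aff_dim_cone_Int_level[OF linear_compose_add[OF linear_lsum linear_rsum]
          convex_cone_cone_face cone_face_nonzero_pos])
  finally show ?thesis using aff_dim_cone_face[OF assms] by simp
qed

lemma slice_face_inj:
  assumes "A \<noteq> {}" "B \<noteq> {}" "X \<noteq> {}" "A' \<noteq> {}" "B' \<noteq> {}" "X' \<noteq> {}"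
    and "slice_face A B X = slice_face A' B' X'"
  shows "A = A' \<and> B = B' \<and> X = X'"
  using assms(1-6) slice_face_subset_iff[of A B X A' B' X'] slice_face_subset_iff[of A' B' X' A B X]
  by (simp add: assms(7)) (blast intro: subset_antisym)

lemma cone_faces_of_dim:
  assumes "3 \<le> n"
  shows "{F. F face_of cone_face UNIV UNIV UNIV \<and> aff_dim F = int n - 2}
    = (\<lambda>(A, B, X). cone_face A B X) ` face_params n"
proof (intro antisym subsetI)
  fix F assume "F \<in> {F. F face_of cone_face UNIV UNIV UNIV \<and> aff_dim F = int n - 2}"
  then have "F \<in> {F. F face_of cone_face UNIV UNIV UNIV}" and dim: "aff_dim F = int n - 2" by auto
  then have "F \<in> insert {} (range (\<lambda>(A, B, X). cone_face A B X))"
    by (simp only: faces_cone_face_UNIV)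
  moreover have "F \<noteq> {}" using dim assms by auto
  ultimately obtain A B X where F: "F = cone_face A B X" by auto
  have "\<not> (A = {} \<or> B = {} \<or> X = {})"
  proof
    assume "A = {} \<or> B = {} \<or> X = {}"
    then have "aff_dim F = 0" by (simp add: F cone_face_degenerate)
    with dim assms show False by simp
  qed
  then have "(A, B, X) \<in> face_params n"
    using aff_dim_cone_face[of A B X] dim by (auto simp: F face_params_def)
  then show "F \<in> (\<lambda>(A, B, X). cone_face A B X) ` face_params n"
    by (metis (no_types) F case_prod_conv imageI)
next
  fix F assume "F \<in> (\<lambda>(A, B, X). cone_face A B X) ` face_params n"
  then obtain A B X where F: "F = cone_face A B X" and ne: "A \<noteq> {}" "B \<noteq> {}" "X \<noteq> {}"
    and "card A + card B + card X = n"
    by (auto simp: face_params_def)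
  then have "aff_dim F = int n - 2" using aff_dim_cone_face[OF ne] by simp
  moreover have "F \<in> insert {} (range (\<lambda>(A, B, X). cone_face A B X))" using F by auto
  then have "F \<in> {F. F face_of cone_face UNIV UNIV UNIV}" by (simp only: faces_cone_face_UNIV)
  ultimately show "F \<in> {F. F face_of cone_face UNIV UNIV UNIV \<and> aff_dim F = int n - 2}" by simp
qed

lemma slice_faces_of_dim:
  assumes "3 \<le> n"
  shows "{F. F face_of slice_face UNIV UNIV UNIV \<and> aff_dim F = int n - 3}
    = (\<lambda>(A, B, X). slice_face A B X) ` face_params n"
proof (intro antisym subsetI)
  fix F assume "F \<in> {F. F face_of slice_face UNIV UNIV UNIV \<and> aff_dim F = int n - 3}"
  then have "F \<in> {F. F face_of slice_face UNIV UNIV UNIV}" and dim: "aff_dim F = int n - 3" by auto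
  then have "F \<in> range (\<lambda>(A, B, X). slice_face A B X)" by (simp only: faces_slice_face_UNIV)
  then obtain A B X where F: "F = slice_face A B X" by auto
  have "\<not> (A = {} \<or> B = {} \<or> X = {})"
  proof
    assume "A = {} \<or> B = {} \<or> X = {}"
    then have "aff_dim F = -1" by (simp add: F slice_face_degenerate)
    with dim assms show False by simp
  qed
  then have "(A, B, X) \<in> face_params n"
    using aff_dim_slice_face[of A B X] dim by (auto simp: F face_params_def)
  then show "F \<in> (\<lambda>(A, B, X). slice_face A B X) ` face_params n"
    by (metis (no_types) F case_prod_conv imageI)
next
  fix F assume "F \<in> (\<lambda>(A, B, X). slice_face A B X) ` face_params n"
  then obtain A B X where F: "F = slice_face A B X" and ne: "A \<noteq> {}" "B \<noteq> {}" "X \<noteq> {}"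
    and "card A + card B + card X = n"
    by (auto simp: face_params_def)
  then have "aff_dim F = int n - 3" using aff_dim_slice_face[OF ne] by simp
  moreover have "F \<in> range (\<lambda>(A, B, X). slice_face A B X)" using F by auto
  then have "F \<in> {F. F face_of slice_face UNIV UNIV UNIV}" by (simp only: faces_slice_face_UNIV)
  ultimately show "F \<in> {F. F face_of slice_face UNIV UNIV UNIV \<and> aff_dim F = int n - 3}" by simp
qed

lemma inj_on_cone_face: "inj_on (\<lambda>(A, B, X). cone_face A B X) (face_params n)"
proof (rule inj_onI)
  fix s t assume "s \<in> face_params n" "t \<in> face_params n"
    and eq: "(\<lambda>(A, B, X). cone_face A B X) s = (\<lambda>(A, B, X). cone_face A B X) t"
  obtain A B X A' B' X' where st: "s = (A, B, X)" "t = (A', B', X')" by (cases s, cases t) auto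
  with \<open>s \<in> face_params n\<close> \<open>t \<in> face_params n\<close>
  have "A \<noteq> {}" "B \<noteq> {}" "X \<noteq> {}" "A' \<noteq> {}" "B' \<noteq> {}" "X' \<noteq> {}"
    by (simp_all add: face_params_def)
  with eq show "s = t" using cone_face_inj[of A B X A' B' X'] by (simp add: st)
qed

lemma inj_on_slice_face: "inj_on (\<lambda>(A, B, X). slice_face A B X) (face_params n)"
proof (rule inj_onI)
  fix s t assume "s \<in> face_params n" "t \<in> face_params n"
    and eq: "(\<lambda>(A, B, X). slice_face A B X) s = (\<lambda>(A, B, X). slice_face A B X) t"
  obtain A B X A' B' X' where st: "s = (A, B, X)" "t = (A', B', X')" by (cases s, cases t) auto
  with \<open>s \<in> face_params n\<close> \<open>t \<in> face_params n\<close>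
  have "A \<noteq> {}" "B \<noteq> {}" "X \<noteq> {}" "A' \<noteq> {}" "B' \<noteq> {}" "X' \<noteq> {}"
    by (simp_all add: face_params_def)
  with eq show "s = t" using slice_face_inj[of A B X A' B' X'] by (simp add: st)
qed

lemma slice_face_UNIV_eq_convex_hull:
  "slice_face (UNIV :: 'a::finite set) (UNIV :: 'b::finite set) UNIV = convex hull (range (\<lambda>(k, l, x). slice_vertex k l x))"
    (is "?P = convex hull (range ?v)")
proof
  have "convex ?P"
    unfolding slice_face_def
    by (rule convex_tight_face[OF affine_imp_convex[OF affine_slice_plane] linear_cone_constr])
  then show "convex hull (range ?v) \<subseteq> ?P"
    by (intro hull_minimal) (auto simp: slice_vertex_mem_slice_face)
next
  show "?P \<subseteq> convex hull (range ?v)"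
  proof
    fix y assume "y \<in> ?P"
    then have "y \<in> cone_face UNIV UNIV UNIV" and "lsum y + rsum y = 1"
      by (simp_all add: slice_face_eq slice_plane_def)
    then obtain c where c: "\<And>k l x. 0 \<le> c k l x"
      and y: "y = (\<Sum>(k, l, x)\<in>UNIV. c k l x *\<^sub>R ext_col k l x)"
      using cone_face_UNIV_decomp by blast
    define h where "h k l x = lsum (ext_col k l x) + rsum (ext_col k l x)" for k :: 'a and l :: 'b and x
    have h_pos: "0 < h k l x" for k l x using one_le_e1 one_le_e2 by (simp add: h_def ext_col_def)
    have "ext_col k l x = h k l x *\<^sub>R slice_vertex k l x" for k l x
      using h_pos[of k l x] unfolding slice_vertex_def h_def by simp
    define a :: "'a \<times> 'b \<times> 2 \<Rightarrow> real" where "a = (\<lambda>(k, l, x). c k l x * h k l x)"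
    have y': "y = (\<Sum>t\<in>UNIV. a t *\<^sub>R ?v t)"
      by (simp add: y a_def split_def \<open>\<And>k l x. ext_col k l x = h k l x *\<^sub>R slice_vertex k l x\<close>)
    have "(\<Sum>t\<in>UNIV. a t) = (\<Sum>(k, l, x)\<in>UNIV. c k l x * lsum (ext_col k l x))
        + (\<Sum>(k, l, x)\<in>UNIV. c k l x * rsum (ext_col k l x))"
      by (simp add: a_def h_def split_def sum.distrib algebra_simps)
    also have "\<dots> = lsum y + rsum y"
      unfolding y by (simp add: split_def linear_sum[OF linear_lsum] linear_sum[OF linear_rsum] o_def)
    finally have sum_a: "(\<Sum>t\<in>UNIV. a t) = 1" using \<open>lsum y + rsum y = 1\<close> by simp
    have "0 \<le> a t" for t
      using c h_pos by (simp add: a_def split_def less_imp_le)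
    moreover have "?v t \<in> convex hull (range ?v)" for t using hull_inc[OF rangeI[of ?v t]] .
    ultimately have "(\<Sum>t\<in>UNIV. a t *\<^sub>R ?v t) \<in> convex hull (range ?v)"
      by (intro convex_sum[where S = UNIV and a = a] convex_convex_hull sum_a) auto
    with y' show "y \<in> convex hull (range ?v)" by simp
  qed
qed

lemma zero_notin_affine_hull_slice_face: "0 \<notin> affine hull (slice_face UNIV UNIV UNIV)"
proof -
  have "affine hull (slice_face UNIV UNIV UNIV) \<subseteq> slice_plane"
    using affine_slice_plane by (intro hull_minimal) (auto simp: slice_face_eq)
  then show ?thesis by (auto simp: slice_plane_def)
qed

lemma cone_face_UNIV_eq_cone_slice:
  "cone_face UNIV UNIV UNIV = {t *\<^sub>R x | t x. 0 \<le> t \<and> x \<in> slice_face UNIV UNIV UNIV}"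
proof (intro antisym subsetI)
  fix y :: "real^('a + 'b)" assume y: "y \<in> cone_face UNIV UNIV UNIV"
  show "y \<in> {t *\<^sub>R x | t x. 0 \<le> t \<and> x \<in> slice_face UNIV UNIV UNIV}"
  proof (cases "y = 0")
    case True
    have "slice_vertex undefined undefined 1 \<in> slice_face (UNIV :: 'a set) (UNIV :: 'b set) UNIV"
      by (simp add: slice_vertex_mem_slice_face)
    then show ?thesis using True by force
  next
    case False
    define t where "t = lsum y + rsum y"
    have "0 < t" using cone_face_nonzero_pos[OF y False] by (simp add: t_def)
    then have "(1 / t) *\<^sub>R y \<in> slice_face UNIV UNIV UNIV"
      using y by (simp add: slice_face_eq slice_plane_def cone_face_scaleR_iff t_def
          add_divide_distrib[symmetric])
    moreover have "y = t *\<^sub>R ((1 / t) *\<^sub>R y)" using \<open>0 < t\<close> by simp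
    ultimately show ?thesis using less_imp_le[OF \<open>0 < t\<close>] by blast
  qed
next
  fix y assume "y \<in> {t *\<^sub>R x | t x. 0 \<le> t \<and> x \<in> slice_face UNIV UNIV UNIV}"
  then show "y \<in> cone_face UNIV UNIV UNIV"
    by (auto simp: slice_face_eq intro: convex_cone_scaleR[OF convex_cone_cone_face])
qed

lemma aff_dim_cone_face_UNIV:
  "aff_dim (cone_face (UNIV :: 'a::finite set) (UNIV :: 'b::finite set) UNIV) = int (CARD('a) + CARD('b))"
  using aff_dim_cone_face[of "UNIV :: 'a set" "UNIV :: 'b set" UNIV] by simp

lemma aff_dim_slice_face_UNIV:
  "aff_dim (slice_face (UNIV :: 'a::finite set) (UNIV :: 'b::finite set) UNIV) = int (CARD('a) + CARD('b)) - 1"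
  using aff_dim_slice_face[of "UNIV :: 'a set" "UNIV :: 'b set" UNIV] by simp

lemma card_cone_rays:
  "card {F. F face_of cone_face (UNIV :: 'a::finite set) (UNIV :: 'b::finite set) UNIV \<and> aff_dim F = 1}
     = 2 * CARD('a) * CARD('b)"
proof -
  have "card {F. F face_of cone_face (UNIV :: 'a set) (UNIV :: 'b set) UNIV \<and> aff_dim F = 1}
      = card ((\<lambda>(A, B, X). cone_face A B X) ` (face_params 3 :: ('a set \<times> 'b set \<times> 2 set) set))"
    using cone_faces_of_dim[of 3, where 'a = 'a and 'b = 'b] by simp
  also have "\<dots> = card (face_params 3 :: ('a set \<times> 'b set \<times> 2 set) set)"
    by (rule card_image[OF inj_on_cone_face])
  also have "\<dots> = CARD('a) * CARD('b) * CARD(2)" by (rule card_face_params_3)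
  finally show ?thesis by simp
qed

lemma range_facet_param:
  assumes "2 \<le> CARD('a::finite)" "2 \<le> CARD('b::finite)"
  shows "range (facet_param :: 'a + 'b + 2 \<Rightarrow> _) = face_params (CARD('a) + CARD('b) + 1)"
  using face_params_facets[where 'a = 'a and 'b = 'b and 'c = 2] assms by simp

lemma facets_cone_face_UNIV:
  assumes "2 \<le> CARD('a::finite)" "2 \<le> CARD('b::finite)"
  shows "{F. F facet_of cone_face (UNIV :: 'a set) (UNIV :: 'b set) UNIV}
    = (\<lambda>(A, B, X). cone_face A B X) ` range facet_param"
proof -
  let ?n = "CARD('a) + CARD('b) + 1"
  have "{F. F facet_of cone_face (UNIV :: 'a set) (UNIV :: 'b set) UNIV}
      = {F. F face_of cone_face (UNIV :: 'a set) (UNIV :: 'b set) UNIV \<and> aff_dim F = int ?n - 2}"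
    using assms by (auto simp: facet_of_def aff_dim_cone_face_UNIV)
  also have "\<dots> = (\<lambda>(A, B, X). cone_face A B X) ` face_params ?n"
    using assms by (intro cone_faces_of_dim) simp
  finally show ?thesis by (simp only: range_facet_param[OF assms])
qed

lemma card_cone_facets:
  assumes "2 \<le> CARD('a::finite)" "2 \<le> CARD('b::finite)"
  shows "card {F. F facet_of cone_face (UNIV :: 'a set) (UNIV :: 'b set) UNIV} = CARD('a) + CARD('b) + 2"
proof -
  have "card {F. F facet_of cone_face (UNIV :: 'a set) (UNIV :: 'b set) UNIV}
      = card (range (facet_param :: 'a + 'b + 2 \<Rightarrow> _))"
    unfolding facets_cone_face_UNIV[OF assms]
    by (rule card_image) (simp only: range_facet_param[OF assms] inj_on_cone_face)
  also have "\<dots> = CARD('a + 'b + 2)" by (simp add: card_image inj_facet_param)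
  finally show ?thesis by simp
qed

lemma facets_slice_face_UNIV:
  assumes "2 \<le> CARD('a::finite)" "2 \<le> CARD('b::finite)"
  shows "{F. F facet_of slice_face (UNIV :: 'a set) (UNIV :: 'b set) UNIV}
    = (\<lambda>(A, B, X). slice_face A B X) ` range facet_param"
proof -
  let ?n = "CARD('a) + CARD('b) + 1"
  have "{F. F facet_of slice_face (UNIV :: 'a set) (UNIV :: 'b set) UNIV}
      = {F. F face_of slice_face (UNIV :: 'a set) (UNIV :: 'b set) UNIV \<and> aff_dim F = int ?n - 3}"
    using assms by (auto simp: facet_of_def aff_dim_slice_face_UNIV)
  also have "\<dots> = (\<lambda>(A, B, X). slice_face A B X) ` face_params ?n"
    using assms by (intro slice_faces_of_dim) simp
  finally show ?thesis by (simp only: range_facet_param[OF assms])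
qed

lemma simple_polytope_slice_face_UNIV:
  assumes "2 \<le> CARD('a::finite)" "2 \<le> CARD('b::finite)"
  shows "simple_polytope (slice_face (UNIV :: 'a set) (UNIV :: 'b set) UNIV)"
  unfolding simple_polytope_def
proof (intro conjI allI impI)
  let ?P = "slice_face (UNIV :: 'a set) (UNIV :: 'b set) UNIV"
  let ?\<phi> = "\<lambda>(A, B, X). slice_face A B X :: (real^('a + 'b)) set"
  show "polytope ?P" by (simp add: slice_face_UNIV_eq_convex_hull polytope_convex_hull)
  fix v assume "v extreme_point_of ?P"
  then have "{v} \<in> {F. F face_of ?P \<and> aff_dim F = int 3 - 3}" by (simp add: face_of_singleton)
  then have "{v} \<in> ?\<phi> ` face_params 3" by (simp only: slice_faces_of_dim[OF order_refl])
  then obtain k l x where "{v} = slice_face {k} {l} {x}" by (auto simp: face_params_3)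
  then have v: "v = slice_vertex k l x"
    using slice_vertex_mem_slice_face[of k l x "{k}" "{l}" "{x}"] by auto
  have "inj_on ?\<phi> (range facet_param)"
    unfolding range_facet_param[OF assms] by (rule inj_on_slice_face)
  then have "inj_on (?\<phi> \<circ> facet_param) UNIV" by (intro comp_inj_on inj_facet_param)
  have "{F. F facet_of ?P \<and> v \<in> F} = {F \<in> {F. F facet_of ?P}. v \<in> F}" by auto
  also have "\<dots> = {F \<in> (?\<phi> \<circ> facet_param) ` UNIV. v \<in> F}"
    by (simp only: facets_slice_face_UNIV[OF assms] image_comp)
  also have "\<dots> = (?\<phi> \<circ> facet_param) ` (- {Inl k, Inr (Inl l), Inr (Inr x)})"
    by (auto simp: v slice_vertex_mem_slice_face facet_param_def)
  also have "card \<dots> = card (- {Inl k, Inr (Inl l), Inr (Inr x)} :: ('a + 'b + 2) set)"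
    by (rule card_image[OF inj_on_subset[OF \<open>inj_on (?\<phi> \<circ> facet_param) UNIV\<close> subset_UNIV]])
  also have "\<dots> = CARD('a) + CARD('b) - 1" by (simp add: card_Compl_finite)
  finally show "int (card {F. F facet_of ?P \<and> v \<in> F}) = aff_dim ?P"
    using assms by (simp add: aff_dim_slice_face_UNIV)
qed

lemma comb_iso_slice_face_UNIV:
  "comb_iso (slice_face (UNIV :: 'a::finite set) (UNIV :: 'b::finite set) UNIV)
     ((std_simplex :: (real^2) set) \<times> (std_simplex :: (real^'a) set) \<times> (std_simplex :: (real^'b) set))"
  by (rule comb_iso_if_faces_param[OF faces_slice_face_UNIV faces_simplex_product])
    (simp add: split_def slice_face_subset_iff simplices_face_subset_iff)

end

theorem proposition4p1:
  fixes e1 e2 :: nat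
  assumes "CARD('a::finite) \<ge> 2" and "CARD('b::finite) \<ge> 2" and "e1 \<ge> 2" and "e2 \<ge> 2"
  defines "C \<equiv> pos_cone (\<lambda>(ka::'a, i, la::'b, j). col_vec ka i la j)
                 {(ka, i, la, j). i \<in> {1..e1} \<and> j \<in> {1..e2}}"
  defines "d \<equiv> CARD('a) + CARD('b)"
  shows "C = {y. (\<forall>m. 0 \<le> y $ m)
                 \<and> (\<Sum>k\<in>UNIV. y $ Inl k) \<le> real e1 * (\<Sum>l\<in>UNIV. y $ Inr l)
                 \<and> (\<Sum>l\<in>UNIV. y $ Inr l) \<le> real e2 * (\<Sum>k\<in>UNIV. y $ Inl k)}
         \<and> aff_dim C = int d
         \<and> card {F. F face_of C \<and> aff_dim F = 1} = 2 * CARD('a) * CARD('b)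
         \<and> card {F. F facet_of C} = CARD('a) + CARD('b) + 2
         \<and> (\<exists>P. polytope P \<and> aff_dim P = int d - 1 \<and> 0 \<notin> affine hull P
               \<and> C = {t *\<^sub>R x | t x. 0 \<le> t \<and> x \<in> P}
               \<and> simple_polytope P
               \<and> comb_iso P ((std_simplex :: (real^2) set) \<times> (std_simplex :: (real^'a) set)
                               \<times> (std_simplex :: (real^'b) set)))"
proof -
  interpret column_cone e1 e2
    using mult_le_mono[OF assms(3,4)] by unfold_locales simp
  have C: "C = cone_face UNIV UNIV UNIV"
    unfolding C_def by (rule pos_cone_columns)
  have "C = {y. (\<forall>m. 0 \<le> y $ m)
                 \<and> (\<Sum>k\<in>UNIV. y $ Inl k) \<le> real e1 * (\<Sum>l\<in>UNIV. y $ Inr l)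
                 \<and> (\<Sum>l\<in>UNIV. y $ Inr l) \<le> real e2 * (\<Sum>k\<in>UNIV. y $ Inl k)}"
    by (simp add: C cone_face_UNIV lsum_def rsum_def)
  moreover have "aff_dim C = int d"
    by (simp add: C d_def aff_dim_cone_face_UNIV)
  moreover have "card {F. F face_of C \<and> aff_dim F = 1} = 2 * CARD('a) * CARD('b)"
    unfolding C by (rule card_cone_rays)
  moreover have "card {F. F facet_of C} = CARD('a) + CARD('b) + 2"
    unfolding C by (rule card_cone_facets[OF assms(1,2)])
  moreover
  let ?P = "slice_face (UNIV :: 'a set) (UNIV :: 'b set) UNIV"
  have "polytope ?P"
    by (simp add: slice_face_UNIV_eq_convex_hull polytope_convex_hull)
  then have "\<exists>P. polytope P \<and> aff_dim P = int d - 1 \<and> 0 \<notin> affine hull P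
      \<and> C = {t *\<^sub>R x | t x. 0 \<le> t \<and> x \<in> P} \<and> simple_polytope P
      \<and> comb_iso P ((std_simplex :: (real^2) set) \<times> (std_simplex :: (real^'a) set)
                     \<times> (std_simplex :: (real^'b) set))"
    using aff_dim_slice_face_UNIV zero_notin_affine_hull_slice_face cone_face_UNIV_eq_cone_slice
      simple_polytope_slice_face_UNIV[OF assms(1,2)] comb_iso_slice_face_UNIV
    by (intro exI[of _ ?P]) (simp add: C d_def)
  ultimately show ?thesis by blast
qed

end
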